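(* Let $N\ge1$ be an integer and $\alpha,\beta,\gamma,\eta,\rho$ complex constants with $\beta\neq0$, $\gamma\neq0$, $\gamma\neq1$, and set $a=\alpha+\frac{\eta\rho}{1-\gamma}$, $b=\frac{\beta\rho}{1-\gamma}$, assuming $a\neq0$. For $N$-tuples $\underline z=(z_1,\dots,z_N)$, $\underline{\tilde z}=(\tilde z_1,\dots,\tilde z_N)$ define $$\hat g_n(\underline z,\underline{\tilde z})=a^{1-N}(\eta\tilde z_n+\beta)\left[\prod_{j=1}^{N}\frac{\tilde z_n-a z_j-b}{\eta z_j+\beta}\right]\left[\prod_{j=1,\,j\neq n}^{N}\frac{\eta\tilde z_j+a\beta-b\eta}{\tilde z_n-\tilde z_j}\right],\qquad n=1,\dots,N.$$ Let $\big(z_1(\ell),\dots,z_N(\ell)\big)$, $\ell=0,1,2,\dots$, be a sequence of $N$-tuples of complex numbers such that for every $\ell\ge0$ the numbers $z_1(\ell+2),\dots,z_N(\ell+2)$ are (in some order, with multiplicity) the $N$ roots in $z$ of $$\sum_{k=1}^{N}\frac{\hat g_k\big(\underline z(\ell),\underline z(\ell+1)\big)}{z-a\,z_k(\ell+1)-b}=\frac1\gamma .$$ Let $Z(\ell)=\mathrm{diag}\big(z_1(\ell),\dots,z_N(\ell)\big)$, $U(0)=Z(0)$, let $M(0)$ be the $N\times N$ matrix with entries $M_{nm}(0)=\hat g_m\big(\underline z(0),\underline z(1)\big)/\big(z_m(1)-a z_n(0)-b\big)$, and $$V(0)=[\eta Z(0)+\beta I]^{-1}\big\{M(0)Z(1)[M(0)]^{-1}-\alpha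 Z(0)\big\},$$ $A=\eta V(0)-\frac{\eta}{\beta}b\,I$, $B=\beta V(0)-bI$, $P(\ell_1,\ell_2)=\prod_{j=\ell_1}^{\ell_2}(A\gamma^{j}+aI)$ (equal to $I$ if $\ell_1>\ell_2$; the factors commute), and $$U(\ell)=U(0)P(0,\ell-1)+\sum_{k=1}^{\ell}\big(B\gamma^{k-1}+bI\big)P(k,\ell-1)$$ (the sum being $0$ if $\ell=0$). Then for every $\ell\ge0$ the multiset $\{z_1(\ell),\dots,z_N(\ell)\}$ coincides with the multiset of eigenvalues of $U(\ell)$.
   Context: $I$ is the $N\times N$ identity matrix. Throughout, data are assumed generic: for every $\ell$ the $z_n(\ell)$ are pairwise distinct, all denominators appearing are nonzero, and the matrices $M(0)$ and $\eta Z(0)+\beta I$ are invertible. *)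

theory Defs
  imports "Jordan_Normal_Form.Char_Poly" "Jordan_Normal_Form.Gauss_Jordan_Elimination"
begin

text \<open>Indices are 0-based: the paper's z_1..z_N are z 0 .. z (N-1).
  A tuple is a function nat => complex, only its values below N matter.\<close>

definition ghat :: "nat \<Rightarrow> complex \<Rightarrow> complex \<Rightarrow> complex \<Rightarrow> complex
     \<Rightarrow> (nat \<Rightarrow> complex) \<Rightarrow> (nat \<Rightarrow> complex) \<Rightarrow> nat \<Rightarrow> complex" where
  "ghat N a b \<eta> \<beta> z zt n =
     a powi (1 - int N) * (\<eta> * zt n + \<beta>)
     * (\<Prod>j<N. (zt n - a * z j - b) / (\<eta> * z j + \<beta>))
     * (\<Prod>j\<in>{..<N} - {n}. (\<eta> * zt j + a * \<beta> - b * \<eta>) / (zt n - zt j))"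

definition mat_prod_list :: "nat \<Rightarrow> complex mat list \<Rightarrow> complex mat" where
  "mat_prod_list N Ms = foldr (*) Ms (1\<^sub>m N)"

definition mat_sum_list :: "nat \<Rightarrow> complex mat list \<Rightarrow> complex mat" where
  "mat_sum_list N Ms = foldr (+) Ms (0\<^sub>m N N)"

definition minv :: "complex mat \<Rightarrow> complex mat" where
  "minv A = the (mat_inverse A)"

definition eigenvalue_mset :: "complex mat \<Rightarrow> complex multiset" where
  "eigenvalue_mset A = proots (char_poly A)"

end

theory Submission
  imports Defs
begin

text \<open>
  Let g l m be the weight ghat (z l) (z (l+1)) m and M l the Cauchy-like matrix with entries
  g l m / (z (l+1) m - a z l n - b), so that M 0 is the paper's M(0); Lagrange interpolation gives
  its inverse explicitly. Let D l be the inverse of \<eta> Z(l) + \<beta> I and let every row of G l be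
  (g l 1, ..., g l N). Interpolation identities and the secular equation for z (l+2) yield
  (a Z(l) + b I) M l + G l = M l Z(l+1), \<gamma> G l M (l+1) = G (l+1) and M l D (l+1) G l = D l G l.
  The explicit U(l) obeys U(l+1) = a U(l) + b I + \<gamma>^l (\<eta> U(l) + \<beta> I) W with W = V(0) - (b/\<beta>) I,
  and for R = M 0 \<cdots> M (l-1) these identities propagate, by induction on l, the two invariants
  U(l) = R Z(l) R^-1 and \<gamma>^(l-1) R^-1 W R = D l G (l-1). Similar matrices have the same eigenvalues.
\<close>

section \<open>Interpolation identities\<close>

lemma prod_diff_neq_zero_if_inj_on:
  fixes x :: "nat \<Rightarrow> 'a::idom"
  assumes "inj_on x {..<N}" "m < N"
  shows "(\<Prod>j\<in>{..<N}-{m}. x m - x j) \<noteq> 0"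
  using assms by (auto simp: inj_on_def)

lemma degree_prod_linear_less:
  fixes x :: "nat \<Rightarrow> 'a::idom"
  assumes "m < N"
  shows "degree (\<Prod>j\<in>{..<N}-{m}. [:-x j, 1:]) < N"
proof -
  have "degree (\<Prod>j\<in>{..<N}-{m}. [:-x j, 1:]) \<le> (\<Sum>j\<in>{..<N}-{m}. degree [:-x j, 1:])"
    using degree_prod_sum_le[of "{..<N}-{m}" "\<lambda>j. [:-x j, 1:]"] by (simp add: o_def)
  also have "\<dots> = N - 1" using assms by simp
  finally show ?thesis using assms by linarith
qed

lemma lagrange_interpolation:
  fixes x :: "nat \<Rightarrow> 'a::field" and h :: "'a poly"
  assumes inj: "inj_on x {..<N}" and deg: "degree h < N"
  shows "poly h w = (\<Sum>m<N. poly h (x m) * (\<Prod>j\<in>{..<N}-{m}. w - x j) / (\<Prod>j\<in>{..<N}-{m}. x m - x j))"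
proof -
  define L where "L = (\<Sum>m<N. Polynomial.smult (poly h (x m) / (\<Prod>j\<in>{..<N}-{m}. x m - x j)) (\<Prod>j\<in>{..<N}-{m}. [:-x j, 1:]))"
  have poly_L: "poly L w = (\<Sum>m<N. poly h (x m) * (\<Prod>j\<in>{..<N}-{m}. w - x j) / (\<Prod>j\<in>{..<N}-{m}. x m - x j))" for w
    unfolding L_def by (simp add: poly_sum poly_prod)
  have "degree L < N"
    unfolding L_def using deg
    by (intro degree_sum_less) (auto intro: le_less_trans[OF degree_smult_le] degree_prod_linear_less)
  moreover have "poly L (x k) = poly h (x k)" if k: "k < N" for k
  proof -
    let ?F = "\<lambda>m. poly h (x m) * (\<Prod>j\<in>{..<N}-{m}. x k - x j) / (\<Prod>j\<in>{..<N}-{m}. x m - x j)"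
    have "?F m = 0" if "m \<in> {..<N} - {k}" for m
    proof -
      have "(\<Prod>j\<in>{..<N}-{m}. x k - x j) = 0"
        using that k by (intro prod_zero) auto
      then show ?thesis by simp
    qed
    then have "poly L (x k) = ?F k"
      unfolding poly_L using k by (simp add: sum.remove[of _ k] sum.neutral)
    then show ?thesis using prod_diff_neq_zero_if_inj_on[OF inj k] by simp
  qed
  ultimately have "L = h"
  proof (intro poly_eqI_degree[where A = "x ` {..<N}"])
    have "card (x ` {..<N}) = N" using inj by (simp add: card_image)
    then show "degree L < card (x ` {..<N})" "degree h < card (x ` {..<N})"
      using \<open>degree L < N\<close> deg by auto
  qed auto
  then show ?thesis using poly_L[of w] by (simp only:)
qed

lemma cauchy_inverse_sum:
  fixes x y :: "nat \<Rightarrow> 'a::field"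
  assumes inj_x: "inj_on x {..<N}" and inj_y: "inj_on y {..<N}"
    and xy: "\<And>m n. m < N \<Longrightarrow> n < N \<Longrightarrow> x m \<noteq> y n"
    and m: "m < N" and k: "k < N"
  shows "(\<Sum>n<N. ((\<Prod>i<N. x m - y i) / (\<Prod>j\<in>{..<N}-{m}. x m - x j))
            * ((\<Prod>j<N. y n - x j) / (\<Prod>i\<in>{..<N}-{n}. y n - y i)) / (y n - x m) / (x k - y n))
         = (if m = k then 1 else 0)" (is "(\<Sum>n<N. ?f n) = _")
proof -
  define h where "h = (\<Prod>j\<in>{..<N}-{m}. [:-x j, 1:])"
  have poly_h: "poly h w = (\<Prod>j\<in>{..<N}-{m}. w - x j)" for w
    unfolding h_def by (simp add: poly_prod)
  define c where "c = (\<Prod>i<N. x m - y i) / (\<Prod>j\<in>{..<N}-{m}. x m - x j) / (\<Prod>i<N. x k - y i)"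
  have P_k: "(\<Prod>i<N. x k - y i) \<noteq> 0" using xy k by auto
  have summand: "?f n = c * (poly h (y n) * (\<Prod>i\<in>{..<N}-{n}. x k - y i) / (\<Prod>i\<in>{..<N}-{n}. y n - y i))"
    if n: "n < N" for n
  proof -
    have split_m: "(\<Prod>j<N. y n - x j) = (y n - x m) * poly h (y n)"
      unfolding poly_h using m by (simp add: prod.remove[of _ m])
    have split_n: "(\<Prod>i<N. x k - y i) = (x k - y n) * (\<Prod>i\<in>{..<N}-{n}. x k - y i)"
      using n by (simp add: prod.remove[of _ n])
    have "y n - x m \<noteq> 0" "x k - y n \<noteq> 0" "(\<Prod>i\<in>{..<N}-{n}. x k - y i) \<noteq> 0"
      using xy[OF m n] xy[OF k n] xy[OF k] by auto
    moreover have "A * (u * p / Q) / u / v = A / (v * P) * (p * P / Q)"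
      if "u \<noteq> 0" "v \<noteq> 0" "Q \<noteq> 0" "P \<noteq> 0" for A u p Q v P :: 'a
      using that by (simp add: field_simps)
    ultimately show ?thesis
      unfolding c_def split_m split_n using prod_diff_neq_zero_if_inj_on[OF inj_y n] by simp
  qed
  have "(\<Sum>n<N. ?f n)
      = c * (\<Sum>n<N. poly h (y n) * (\<Prod>i\<in>{..<N}-{n}. x k - y i) / (\<Prod>i\<in>{..<N}-{n}. y n - y i))"
    unfolding sum_distrib_left by (rule sum.cong[OF refl], rule summand) simp
  also have "\<dots> = c * poly h (x k)"
    by (simp only: lagrange_interpolation[OF inj_y degree_prod_linear_less[OF m, of x, folded h_def], of "x k"])
  also have "\<dots> = (if m = k then 1 else 0)"
  proof (cases "m = k")
    case True
    then show ?thesis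
      using P_k prod_diff_neq_zero_if_inj_on[OF inj_x m] unfolding c_def poly_h by simp
  next
    case False
    then have "poly h (x k) = 0" unfolding poly_h using k by (intro prod_zero) auto
    then show ?thesis using False by simp
  qed
  finally show ?thesis .
qed

lemma interpolation_prod_identity:
  fixes x y :: "nat \<Rightarrow> complex"
  assumes inj_x: "inj_on x {..<N}" and n: "n < N"
  shows "(\<Sum>m<N. (\<Prod>j\<in>{..<N}-{n}. x m - y j) * (\<Prod>j\<in>{..<N}-{m}. K + t * x j)
            / (\<Prod>j\<in>{..<N}-{m}. x m - x j)) = (\<Prod>j\<in>{..<N}-{n}. K + t * y j)"
    (is "?lhs t = ?rhs t")
proof -
  have nonzero_t: "?lhs t = ?rhs t" if t: "t \<noteq> 0" for t
  proof -
    define h where "h = (\<Prod>j\<in>{..<N}-{n}. [:-y j, 1:])"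
    have poly_h: "poly h w = (\<Prod>j\<in>{..<N}-{n}. w - y j)" for w
      unfolding h_def by (simp add: poly_prod)
    define w where "w = - K / t"
    have scale: "(\<Prod>j\<in>{..<N}-{i}. K + t * v j) = (-t) ^ (N - 1) * (\<Prod>j\<in>{..<N}-{i}. w - v j)"
      if "i < N" for i and v :: "nat \<Rightarrow> complex"
    proof -
      have "(\<Prod>j\<in>{..<N}-{i}. K + t * v j) = (\<Prod>j\<in>{..<N}-{i}. (-t) * (w - v j))"
        unfolding w_def using t by (intro prod.cong) (auto simp: field_simps)
      also have "\<dots> = (\<Prod>j\<in>{..<N}-{i}. -t) * (\<Prod>j\<in>{..<N}-{i}. w - v j)"
        by (rule prod.distrib)
      finally show ?thesis using that by (simp add: card_Diff_singleton)
    qed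
    have "?lhs t = (\<Sum>m<N. (-t) ^ (N - 1) *
        (poly h (x m) * (\<Prod>j\<in>{..<N}-{m}. w - x j) / (\<Prod>j\<in>{..<N}-{m}. x m - x j)))"
      by (intro sum.cong refl) (simp add: scale poly_h mult_ac)
    also have "\<dots> = (-t) ^ (N - 1) * poly h w"
      unfolding sum_distrib_left[symmetric]
      by (simp only: lagrange_interpolation[OF inj_x degree_prod_linear_less[OF n, of y, folded h_def], of w])
    also have "\<dots> = ?rhs t" using scale[OF n, of y] by (simp add: poly_h)
    finally show ?thesis .
  qed
  show ?thesis
  proof (cases "t = 0")
    case True
    \<comment> \<open>both sides are continuous in t, so the case t = 0 follows from t \<noteq> 0\<close>
    have "isCont ?lhs 0"
      by (intro continuous_intros) (auto dest: inj_onD[OF inj_x])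
    then have "(?lhs \<longlongrightarrow> ?lhs 0) (at 0)" by (simp add: isCont_def)
    moreover have "(?lhs \<longlongrightarrow> ?rhs 0) (at 0)"
    proof (rule Lim_transform_eventually)
      show "(?rhs \<longlongrightarrow> ?rhs 0) (at 0)" by (intro tendsto_intros)
      show "eventually (\<lambda>t. ?rhs t = ?lhs t) (at 0)"
        using nonzero_t by (auto simp: eventually_at intro!: exI[of _ 1])
    qed
    ultimately have "?lhs 0 = ?rhs 0" by (rule tendsto_unique[OF at_neq_bot])
    then show ?thesis using True by simp
  qed (rule nonzero_t)
qed

lemma ghat_resolvent_sum:
  fixes z z' :: "nat \<Rightarrow> complex"
  assumes N: "N \<ge> 1" and a: "a \<noteq> 0" and inj': "inj_on z' {..<N}"
    and den: "\<And>j. j < N \<Longrightarrow> \<eta> * z j + \<beta> \<noteq> 0"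
    and den': "\<And>j. j < N \<Longrightarrow> \<eta> * z' j + \<beta> \<noteq> 0"
    and diff: "\<And>m n. m < N \<Longrightarrow> n < N \<Longrightarrow> z' m - a * z n - b \<noteq> 0"
    and n: "n < N"
  shows "(\<Sum>m<N. ghat N a b \<eta> \<beta> z z' m / (z' m - a * z n - b) / (\<eta> * z' m + \<beta>))
         = 1 / (\<eta> * z n + \<beta>)"
proof -
  define y where "y j = a * z j + b" for j
  define K where "K = a * \<beta> - b * \<eta>"
  define P where "P = (\<Prod>j\<in>{..<N}-{n}. \<eta> * z j + \<beta>)"
  define c where "c = a powi (1 - int N) / ((\<eta> * z n + \<beta>) * P)"
  have P: "P \<noteq> 0" unfolding P_def using den by auto
  have summand: "ghat N a b \<eta> \<beta> z z' m / (z' m - a * z n - b) / (\<eta> * z' m + \<beta>)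
     = c * ((\<Prod>j\<in>{..<N}-{n}. z' m - y j) * (\<Prod>j\<in>{..<N}-{m}. K + \<eta> * z' j)
            / (\<Prod>j\<in>{..<N}-{m}. z' m - z' j))" if m: "m < N" for m
  proof -
    have "(\<Prod>j<N. (z' m - a * z j - b) / (\<eta> * z j + \<beta>))
        = (z' m - a * z n - b) * (\<Prod>j\<in>{..<N}-{n}. z' m - y j) / ((\<eta> * z n + \<beta>) * P)"
      using n by (simp add: prod_dividef prod.remove[of _ n] P_def y_def algebra_simps)
    moreover have "(\<Prod>j\<in>{..<N}-{m}. (\<eta> * z' j + a * \<beta> - b * \<eta>) / (z' m - z' j))
        = (\<Prod>j\<in>{..<N}-{m}. K + \<eta> * z' j) / (\<Prod>j\<in>{..<N}-{m}. z' m - z' j)"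
      by (simp add: prod_dividef K_def algebra_simps)
    moreover have "e * (u * Q / D) * R / u / e = e * (Q * R) / D / e"
      if "u \<noteq> 0" for e u Q D R :: complex
      using that by (simp add: field_simps)
    ultimately show ?thesis
      unfolding ghat_def c_def using diff[OF m n] den'[OF m] by (simp add: mult_ac)
  qed
  have "(\<Sum>m<N. ghat N a b \<eta> \<beta> z z' m / (z' m - a * z n - b) / (\<eta> * z' m + \<beta>))
      = c * (\<Prod>j\<in>{..<N}-{n}. K + \<eta> * y j)"
    unfolding interpolation_prod_identity[OF inj' n, symmetric] sum_distrib_left
    by (rule sum.cong[OF refl], rule summand) simp
  also have "(\<Prod>j\<in>{..<N}-{n}. K + \<eta> * y j) = (\<Prod>j\<in>{..<N}-{n}. a * (\<eta> * z j + \<beta>))"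
    by (intro prod.cong) (simp_all add: K_def y_def algebra_simps)
  also have "\<dots> = a ^ (N - 1) * P"
    using n by (simp add: P_def prod.distrib card_Diff_singleton)
  also have "c * (a ^ (N - 1) * P) = 1 / (\<eta> * z n + \<beta>)"
  proof -
    have "1 - int N = - int (N - 1)" using N by simp
    then have "a powi (1 - int N) = inverse (a ^ (N - 1))"
      by (simp only: power_int_minus power_int_of_nat)
    moreover have "inverse q / (e * P) * (q * P) = 1 / e" if "q \<noteq> 0" "e \<noteq> 0" for q e
      using that P by (simp add: field_simps)
    ultimately show ?thesis using a den[OF n] by (simp add: c_def)
  qed
  finally show ?thesis .
qed

lemma index_mult_mat_sum:
  assumes "A \<in> carrier_mat n m" "B \<in> carrier_mat m p" "i < n" "j < p"
  shows "(A * B) $$ (i, j) = (\<Sum>k<m. A $$ (i, k) * B $$ (k, j))"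
  using assms by (simp add: scalar_prod_def atLeast0LessThan)

lemma one_smult_mat: "1 \<cdot>\<^sub>m A = (A :: 'a::monoid_mult mat)"
  by (rule eq_matI) auto

lemma mat_diff_diff_eq:
  fixes A B C :: "'a::ab_group_add mat"
  assumes "A \<in> carrier_mat n m" "B \<in> carrier_mat n m" "C \<in> carrier_mat n m"
  shows "A - B - C = A - (B + C)"
  using assms by (intro eq_matI) auto

lemma mat_add_diff_cancel_left:
  fixes A B :: "'a::ab_group_add mat"
  assumes "A \<in> carrier_mat n m" "B \<in> carrier_mat n m"
  shows "A + B - A = B" and "A + (B - A) = B"
  using assms by (auto intro!: eq_matI)

lemma smult_smult_mat: "c \<cdot>\<^sub>m (d \<cdot>\<^sub>m A) = (c * d) \<cdot>\<^sub>m (A :: 'a::semigroup_mult mat)"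
  by (rule eq_matI) (auto simp: mult.assoc)

lemma mat_prod_list_carrier:
  "\<forall>M\<in>set Ms. M \<in> carrier_mat n n \<Longrightarrow> mat_prod_list n Ms \<in> carrier_mat n n"
  unfolding mat_prod_list_def by (induction Ms) auto

lemma mat_prod_list_snoc:
  assumes "\<forall>L\<in>set Ms. L \<in> carrier_mat n n" "M \<in> carrier_mat n n"
  shows "mat_prod_list n (Ms @ [M]) = mat_prod_list n Ms * M"
  using assms
proof (induction Ms)
  case (Cons L Ms)
  then show ?case
    using mat_prod_list_carrier[of Ms n] by (simp add: mat_prod_list_def assoc_mult_mat[of L n n])
qed (simp add: mat_prod_list_def)

lemma mat_sum_list_carrier:
  "\<forall>M\<in>set Ms. M \<in> carrier_mat n n \<Longrightarrow> mat_sum_list n Ms \<in> carrier_mat n n"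
  unfolding mat_sum_list_def by (induction Ms) auto

lemma mat_sum_list_snoc:
  assumes "\<forall>L\<in>set Ms. L \<in> carrier_mat n n" "M \<in> carrier_mat n n"
  shows "mat_sum_list n (Ms @ [M]) = mat_sum_list n Ms + M"
  using assms
proof (induction Ms)
  case (Cons L Ms)
  then show ?case
    using mat_sum_list_carrier[of Ms n] by (simp add: mat_sum_list_def assoc_add_mat[of L n n])
qed (simp add: mat_sum_list_def)

lemma mat_sum_list_mult_right:
  assumes "\<forall>M\<in>set Ms. M \<in> carrier_mat n n" "F \<in> carrier_mat n n"
  shows "mat_sum_list n (map (\<lambda>M. M * F) Ms) = mat_sum_list n Ms * F"
  using assms
proof (induction Ms)
  case (Cons M Ms)
  then show ?case
    using mat_sum_list_carrier[of Ms n] by (simp add: mat_sum_list_def add_mult_distrib_mat[of M n n])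
qed (simp add: mat_sum_list_def)

lemma product_sum_recurrence:
  fixes f g :: "nat \<Rightarrow> complex mat"
  assumes f: "\<And>j. f j \<in> carrier_mat n n" and g: "\<And>k. g k \<in> carrier_mat n n"
    and U0: "U0 \<in> carrier_mat n n"
    and U: "\<And>l. U l = U0 * mat_prod_list n (map f [0..<l])
      + mat_sum_list n (map (\<lambda>k. g k * mat_prod_list n (map f [k..<l])) [1..<Suc l])"
  shows "U (Suc l) = U l * f l + g (Suc l)" and "U l \<in> carrier_mat n n"
proof -
  define P where "P k l = mat_prod_list n (map f [k..<l])" for k l
  define S where "S l = mat_sum_list n (map (\<lambda>k. g k * P k l) [1..<Suc l])" for l
  have P: "P k l \<in> carrier_mat n n" for k l
    unfolding P_def using f by (intro mat_prod_list_carrier) auto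
  have gP: "\<forall>M\<in>set (map (\<lambda>k. g k * P k l) ks). M \<in> carrier_mat n n" for l ks
    using g P by (auto intro: mult_carrier_mat)
  have S: "S l \<in> carrier_mat n n" for l
    unfolding S_def using gP by (intro mat_sum_list_carrier)
  have U_PS: "U l = U0 * P 0 l + S l" for l
    unfolding U P_def S_def ..
  then show "U l \<in> carrier_mat n n" using U0 P S by simp
  have P_Suc: "P k (Suc l) = P k l * f l" if "k \<le> l" for k
    unfolding P_def using that f by (simp add: mat_prod_list_snoc)
  have shift: "map (\<lambda>k. g k * P k (Suc l)) [1..<Suc l] = map (\<lambda>M. M * f l) (map (\<lambda>k. g k * P k l) [1..<Suc l])"
    by (auto simp: P_Suc assoc_mult_mat[OF g P f])
  have "S (Suc l) = mat_sum_list n (map (\<lambda>k. g k * P k (Suc l)) [1..<Suc l] @ [g (Suc l) * P (Suc l) (Suc l)])"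
    unfolding S_def by simp
  also have "\<dots> = mat_sum_list n (map (\<lambda>k. g k * P k (Suc l)) [1..<Suc l]) + g (Suc l) * P (Suc l) (Suc l)"
    by (rule mat_sum_list_snoc[OF gP mult_carrier_mat[OF g P]])
  also have "mat_sum_list n (map (\<lambda>k. g k * P k (Suc l)) [1..<Suc l]) = S l * f l"
    unfolding shift S_def by (rule mat_sum_list_mult_right[OF gP f])
  also have "P (Suc l) (Suc l) = 1\<^sub>m n" unfolding P_def mat_prod_list_def by simp
  finally have S_Suc: "S (Suc l) = S l * f l + g (Suc l)" using right_mult_one_mat[OF g] by simp
  have "(U0 * P 0 l + S l) * f l + g (Suc l) = U0 * (P 0 l * f l) + (S l * f l + g (Suc l))"
    by (simp add: add_mult_distrib_mat[OF mult_carrier_mat[OF U0 P] S f] assoc_mult_mat[OF U0 P f]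
        assoc_add_mat[OF mult_carrier_mat[OF U0 mult_carrier_mat[OF P f]] mult_carrier_mat[OF S f] g])
  then show "U (Suc l) = U l * f l + g (Suc l)"
    unfolding U_PS S_Suc P_Suc[OF le0] by (rule sym)
qed

lemma minv_eqI:
  fixes A T :: "complex mat"
  assumes A: "A \<in> carrier_mat n n" and T: "T \<in> carrier_mat n n"
    and AT: "A * T = 1\<^sub>m n" and TA: "T * A = 1\<^sub>m n"
  shows "minv A = T"
proof -
  have "A \<in> Units (ring_mat TYPE(complex) n ())"
    unfolding Units_def using A T AT TA by (auto simp: ring_mat_simps)
  then obtain C where C: "mat_inverse A = Some C"
    using mat_inverse(1)[OF A, where b = "()"] by (cases "mat_inverse A") auto
  then have CA: "C * A = 1\<^sub>m n" and C_carrier: "C \<in> carrier_mat n n"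
    using mat_inverse(2)[OF A] by auto
  have "C = (C * A) * T" using C_carrier AT A T by (simp add: assoc_mult_mat[of C n n])
  then show ?thesis unfolding minv_def C CA using T by simp
qed

lemma eigenvalue_mset_mat_diag: "eigenvalue_mset (mat_diag n f) = mset (map f [0..<n])"
proof -
  have "upper_triangular (mat_diag n f)" unfolding upper_triangular_def mat_diag_def by auto
  moreover have "diag_mat (mat_diag n f) = map f [0..<n]"
    unfolding diag_mat_def mat_diag_def by (simp add: list_eq_iff_nth_eq)
  ultimately have char_poly: "char_poly (mat_diag n f) = (\<Prod>c\<leftarrow>map f [0..<n]. [:- c, 1:])"
    using char_poly_upper_triangular[OF mat_diag_dim] by metis
  have proots_prod: "proots (\<Prod>c\<leftarrow>cs. [:- c, 1:]) = mset cs" for cs :: "complex list"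
  proof (induction cs)
    case (Cons c cs)
    have "(\<Prod>d\<leftarrow>cs. [:- d, 1:]) \<noteq> 0" by (auto simp: prod_list_zero_iff)
    then show ?case using Cons by (simp add: proots_mult del: mult_pCons_left)
  qed simp
  show ?thesis unfolding eigenvalue_mset_def char_poly by (rule proots_prod)
qed

lemma eigenvalue_mset_similar: "similar_mat A B \<Longrightarrow> eigenvalue_mset A = eigenvalue_mset B"
  unfolding eigenvalue_mset_def by (simp add: char_poly_similar)

lemma mat_diag_affine: "a \<cdot>\<^sub>m mat_diag n f + b \<cdot>\<^sub>m 1\<^sub>m n = mat_diag n (\<lambda>i. a * f i + (b::'a::comm_ring_1))"
  by (rule eq_matI) (auto simp: mat_diag_def)

lemma similar_mat_wit_affine_update:
  fixes U V R Ri W :: "'a::comm_ring_1 mat"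
  assumes sim: "similar_mat_wit U V R Ri" and U: "U \<in> carrier_mat n n" and W: "W \<in> carrier_mat n n"
  shows "similar_mat_wit (a \<cdot>\<^sub>m U + b \<cdot>\<^sub>m 1\<^sub>m n + c \<cdot>\<^sub>m ((e \<cdot>\<^sub>m U + f \<cdot>\<^sub>m 1\<^sub>m n) * W))
           (a \<cdot>\<^sub>m V + b \<cdot>\<^sub>m 1\<^sub>m n + c \<cdot>\<^sub>m ((e \<cdot>\<^sub>m V + f \<cdot>\<^sub>m 1\<^sub>m n) * (Ri * W * R))) R Ri"
proof -
  note wit = similar_mat_witD2[OF U sim]
  have R: "R \<in> carrier_mat n n" and Ri: "Ri \<in> carrier_mat n n" and V: "V \<in> carrier_mat n n"
    using wit by auto
  define conj where "conj X = R * X * Ri" for X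
  have cancel: "Ri * (R * X) = X" if "X \<in> carrier_mat n n" for X
    using that R Ri wit(2) by (simp flip: assoc_mult_mat[of Ri n n R n X n])
  have cancel': "R * (Ri * X) = X" if "X \<in> carrier_mat n n" for X
    using that R Ri wit(1) by (simp flip: assoc_mult_mat[of R n n Ri n X n])
  have conj_add: "conj (X + Y) = conj X + conj Y" and conj_mult: "conj (X * Y) = conj X * conj Y"
    if "X \<in> carrier_mat n n" "Y \<in> carrier_mat n n" for X Y
    using that R Ri
    by (simp_all add: conj_def cancel mult_add_distrib_mat[of R n n] add_mult_distrib_mat[of _ n n]
        assoc_mult_mat[of _ n n _ n _ n])
  have conj_smult: "conj (k \<cdot>\<^sub>m X) = k \<cdot>\<^sub>m conj X" if "X \<in> carrier_mat n n" for X k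
    using that R Ri by (simp add: conj_def mult_smult_distrib[of R n n] mult_smult_assoc_mat[of _ n n])
  have conj_one: "conj (1\<^sub>m n) = 1\<^sub>m n" using wit(1) R by (simp add: conj_def)
  have "conj (a \<cdot>\<^sub>m V + b \<cdot>\<^sub>m 1\<^sub>m n + c \<cdot>\<^sub>m ((e \<cdot>\<^sub>m V + f \<cdot>\<^sub>m 1\<^sub>m n) * X))
      = a \<cdot>\<^sub>m conj V + b \<cdot>\<^sub>m 1\<^sub>m n + c \<cdot>\<^sub>m ((e \<cdot>\<^sub>m conj V + f \<cdot>\<^sub>m 1\<^sub>m n) * conj X)"
    if "X \<in> carrier_mat n n" for X
    using that V by (simp add: conj_add conj_smult conj_mult conj_one mult_carrier_mat[of _ n n _ n])
  moreover have "conj V = U" and "conj (Ri * W * R) = W"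
    using wit R Ri W by (simp_all add: conj_def cancel' assoc_mult_mat[of _ n n _ n _ n])
  ultimately have "conj (a \<cdot>\<^sub>m V + b \<cdot>\<^sub>m 1\<^sub>m n + c \<cdot>\<^sub>m ((e \<cdot>\<^sub>m V + f \<cdot>\<^sub>m 1\<^sub>m n) * (Ri * W * R)))
      = a \<cdot>\<^sub>m U + b \<cdot>\<^sub>m 1\<^sub>m n + c \<cdot>\<^sub>m ((e \<cdot>\<^sub>m U + f \<cdot>\<^sub>m 1\<^sub>m n) * W)"
    using R Ri W by simp
  then show ?thesis
    using wit R Ri W V unfolding conj_def by (intro similar_mat_witI) auto
qed

lemma mult_affine_eq_affine_update:
  fixes U W :: "'a::comm_ring_1 mat"
  assumes U: "U \<in> carrier_mat n n" and W: "W \<in> carrier_mat n n"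
  shows "U * (c \<cdot>\<^sub>m (e \<cdot>\<^sub>m W) + a \<cdot>\<^sub>m 1\<^sub>m n) + (c \<cdot>\<^sub>m (f \<cdot>\<^sub>m W) + b \<cdot>\<^sub>m 1\<^sub>m n)
    = a \<cdot>\<^sub>m U + b \<cdot>\<^sub>m 1\<^sub>m n + c \<cdot>\<^sub>m ((e \<cdot>\<^sub>m U + f \<cdot>\<^sub>m 1\<^sub>m n) * W)"
proof -
  have "U * (c \<cdot>\<^sub>m (e \<cdot>\<^sub>m W) + a \<cdot>\<^sub>m 1\<^sub>m n) = c \<cdot>\<^sub>m (e \<cdot>\<^sub>m (U * W)) + a \<cdot>\<^sub>m U"
    using U W by (simp add: mult_add_distrib_mat[of U n n _ n] mult_smult_distrib[of U n n _ n])
  moreover have "(e \<cdot>\<^sub>m U + f \<cdot>\<^sub>m 1\<^sub>m n) * W = e \<cdot>\<^sub>m (U * W) + f \<cdot>\<^sub>m W"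
    using U W by (simp add: add_mult_distrib_mat[of _ n n _ _ n] mult_smult_assoc_mat[of _ n n _ n])
  ultimately show ?thesis
    using U W by (intro eq_matI) (auto simp: algebra_simps)
qed

section \<open>The matrices of the dynamics\<close>

locale secular_dynamics =
  fixes N :: nat and a b \<eta> \<beta> \<gamma> :: complex and z :: "nat \<Rightarrow> nat \<Rightarrow> complex"
  assumes N: "N \<ge> 1" and a: "a \<noteq> 0" and \<gamma>: "\<gamma> \<noteq> 0"
    and distinct: "\<And>l. inj_on (z l) {..<N}"
    and den: "\<And>l j. j < N \<Longrightarrow> \<eta> * z l j + \<beta> \<noteq> 0"
    and diff: "\<And>l n k. n < N \<Longrightarrow> k < N \<Longrightarrow> z (Suc l) n - a * z l k - b \<noteq> 0"
    and secular: "\<And>l j. j < N \<Longrightarrow>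
      (\<Sum>k<N. ghat N a b \<eta> \<beta> (z l) (z (Suc l)) k / (z (Suc (Suc l)) j - a * z (Suc l) k - b)) = 1 / \<gamma>"
begin

definition g :: "nat \<Rightarrow> nat \<Rightarrow> complex" where
  "g l m = ghat N a b \<eta> \<beta> (z l) (z (Suc l)) m"

definition Z :: "nat \<Rightarrow> complex mat" where
  "Z l = mat_diag N (z l)"

definition M :: "nat \<Rightarrow> complex mat" where
  "M l = mat N N (\<lambda>(i, j). g l j / (z (Suc l) j - a * z l i - b))"

definition M_inv :: "nat \<Rightarrow> complex mat" where
  "M_inv l = mat N N (\<lambda>(m, n).
     ((\<Prod>i<N. z (Suc l) m - (a * z l i + b)) / (\<Prod>j\<in>{..<N}-{m}. z (Suc l) m - z (Suc l) j))
     * ((\<Prod>j<N. (a * z l n + b) - z (Suc l) j) / (\<Prod>i\<in>{..<N}-{n}. (a * z l n + b) - (a * z l i + b)))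
     / ((a * z l n + b) - z (Suc l) m) / g l m)"

definition D :: "nat \<Rightarrow> complex mat" where
  "D l = mat_diag N (\<lambda>i. 1 / (\<eta> * z l i + \<beta>))"

definition G :: "nat \<Rightarrow> complex mat" where
  "G l = mat N N (\<lambda>(i, j). g l j)"

lemma carrier_mats [simp]:
  "Z l \<in> carrier_mat N N" "M l \<in> carrier_mat N N" "M_inv l \<in> carrier_mat N N"
  "D l \<in> carrier_mat N N" "G l \<in> carrier_mat N N"
  by (simp_all add: Z_def M_def M_inv_def D_def G_def)

lemma g_nonzero:
  assumes m: "m < N"
  shows "g l m \<noteq> 0"
proof
  assume "g l m = 0"
  \<comment> \<open>then some factor \<eta> z (l+1) j + a \<beta> - b \<eta> with j \<noteq> m vanishes; it kills every weight g l n
      with n \<noteq> j, and the secular equation makes z (l+2) constant\<close>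
  moreover define c where "c = a powi (1 - int N) * (\<eta> * z (Suc l) m + \<beta>)
      * (\<Prod>j<N. (z (Suc l) m - a * z l j - b) / (\<eta> * z l j + \<beta>))"
  ultimately have "c * (\<Prod>j\<in>{..<N}-{m}. (\<eta> * z (Suc l) j + a * \<beta> - b * \<eta>) / (z (Suc l) m - z (Suc l) j)) = 0"
    unfolding g_def ghat_def by simp
  moreover have "c \<noteq> 0"
    unfolding c_def using a den diff[OF m] m by auto
  ultimately have "(\<Prod>j\<in>{..<N}-{m}. (\<eta> * z (Suc l) j + a * \<beta> - b * \<eta>) / (z (Suc l) m - z (Suc l) j)) = 0"
    by simp
  then obtain j where j: "j < N" "j \<noteq> m"
    and "(\<eta> * z (Suc l) j + a * \<beta> - b * \<eta>) / (z (Suc l) m - z (Suc l) j) = 0"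
    by auto
  moreover have "z (Suc l) m \<noteq> z (Suc l) j" using inj_onD[OF distinct] j m by blast
  ultimately have factor: "\<eta> * z (Suc l) j + a * \<beta> - b * \<eta> = 0" by simp
  have others: "g l n = 0" if "n < N" "n \<noteq> j" for n
  proof -
    have "(\<Prod>i\<in>{..<N}-{n}. (\<eta> * z (Suc l) i + a * \<beta> - b * \<eta>) / (z (Suc l) n - z (Suc l) i)) = 0"
      by (rule prod_zero) (use that j factor in auto)
    then show ?thesis unfolding g_def ghat_def by simp
  qed
  have shift: "z (Suc (Suc l)) i - a * z (Suc l) j - b = \<gamma> * g l j" if i: "i < N" for i
  proof -
    have "(\<Sum>k<N. g l k / (z (Suc (Suc l)) i - a * z (Suc l) k - b))
        = g l j / (z (Suc (Suc l)) i - a * z (Suc l) j - b)"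
      using j others by (simp add: sum.remove[of _ j] sum.neutral)
    then have "g l j / (z (Suc (Suc l)) i - a * z (Suc l) j - b) = 1 / \<gamma>"
      using secular[OF i] unfolding g_def by simp
    then show ?thesis using diff[OF i j(1)] \<gamma> by (simp add: field_simps)
  qed
  have "z (Suc (Suc l)) m = (z (Suc (Suc l)) m - a * z (Suc l) j - b) + a * z (Suc l) j + b" by simp
  also have "\<dots> = (z (Suc (Suc l)) j - a * z (Suc l) j - b) + a * z (Suc l) j + b"
    using shift[OF m] shift[OF j(1)] by simp
  finally have "z (Suc (Suc l)) m = z (Suc (Suc l)) j" by simp
  then show False using inj_onD[OF distinct] j m by blast
qed

lemma M_inv_mult_M: "M_inv l * M l = 1\<^sub>m N"
proof (rule eq_matI)
  fix i j assume "i < dim_row (1\<^sub>m N)" "j < dim_col (1\<^sub>m N)"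
  then have i: "i < N" and j: "j < N" by auto
  let ?y = "\<lambda>n. a * z l n + b"
  have "(M_inv l * M l) $$ (i, j) = (g l j / g l i) * (\<Sum>n<N.
      ((\<Prod>k<N. z (Suc l) i - ?y k) / (\<Prod>k\<in>{..<N}-{i}. z (Suc l) i - z (Suc l) k))
      * ((\<Prod>k<N. ?y n - z (Suc l) k) / (\<Prod>k\<in>{..<N}-{n}. ?y n - ?y k))
      / (?y n - z (Suc l) i) / (z (Suc l) j - ?y n))"
    unfolding index_mult_mat_sum[OF carrier_mats(3,2) i j] sum_distrib_left
    using i j by (intro sum.cong refl) (simp add: M_def M_inv_def diff_diff_eq ac_simps)
  also have "\<dots> = 1\<^sub>m N $$ (i, j)"
  proof -
    have inj_y: "inj_on ?y {..<N}" using inj_onD[OF distinct] a by (auto intro: inj_onI)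
    have xy: "z (Suc l) m \<noteq> ?y n" if "m < N" "n < N" for m n
      using diff[OF that] by (auto simp: diff_diff_eq)
    have "(\<Sum>n<N.
      ((\<Prod>k<N. z (Suc l) i - ?y k) / (\<Prod>k\<in>{..<N}-{i}. z (Suc l) i - z (Suc l) k))
      * ((\<Prod>k<N. ?y n - z (Suc l) k) / (\<Prod>k\<in>{..<N}-{n}. ?y n - ?y k))
      / (?y n - z (Suc l) i) / (z (Suc l) j - ?y n)) = (if i = j then 1 else 0)"
      by (rule cauchy_inverse_sum[OF distinct inj_y xy i j])
    then show ?thesis using i j g_nonzero[OF i, of l] by (cases "i = j") simp_all
  qed
  finally show "(M_inv l * M l) $$ (i, j) = 1\<^sub>m N $$ (i, j)" .
qed (simp_all add: M_def M_inv_def)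

lemma M_mult_M_inv: "M l * M_inv l = 1\<^sub>m N"
  by (rule mat_mult_left_right_inverse[OF carrier_mats(3,2) M_inv_mult_M])

lemma affine_Z_mult_D: "(\<eta> \<cdot>\<^sub>m Z l + \<beta> \<cdot>\<^sub>m 1\<^sub>m N) * D l = 1\<^sub>m N"
  "D l * (\<eta> \<cdot>\<^sub>m Z l + \<beta> \<cdot>\<^sub>m 1\<^sub>m N) = 1\<^sub>m N"
  unfolding Z_def D_def mat_diag_affine mat_diag_diag
  by (rule eq_matI; simp add: mat_diag_def den)+

lemma minv_M: "minv (M l) = M_inv l"
  by (rule minv_eqI[OF _ _ M_mult_M_inv M_inv_mult_M]) simp_all

lemma minv_affine_Z: "minv (\<eta> \<cdot>\<^sub>m Z l + \<beta> \<cdot>\<^sub>m 1\<^sub>m N) = D l"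
  by (rule minv_eqI[OF _ _ affine_Z_mult_D]) simp_all

lemma D_mult_G: "D l' * G l = mat N N (\<lambda>(i, j). g l j / (\<eta> * z l' i + \<beta>))"
  unfolding D_def mat_diag_mult_left[OF carrier_mats(5)]
  by (rule eq_matI) (auto simp: G_def mat_diag_def)

lemma M_mult_D_G: "M l * (D (Suc l) * G l) = D l * G l"
proof (rule eq_matI)
  fix i j assume "i < dim_row (D l * G l)" "j < dim_col (D l * G l)"
  then have i: "i < N" and j: "j < N" by (auto simp: D_def G_def mat_diag_def)
  have "(M l * (D (Suc l) * G l)) $$ (i, j) = g l j * (\<Sum>k<N.
      ghat N a b \<eta> \<beta> (z l) (z (Suc l)) k / (z (Suc l) k - a * z l i - b) / (\<eta> * z (Suc l) k + \<beta>))"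
    unfolding index_mult_mat_sum[OF carrier_mats(2) mult_carrier_mat[OF carrier_mats(4,5)] i j]
      sum_distrib_left
    using i j by (intro sum.cong refl) (simp add: M_def D_mult_G g_def)
  also have "\<dots> = (D l * G l) $$ (i, j)"
    using i j
    by (simp only: ghat_resolvent_sum[where z = "z l" and z' = "z (Suc l)", OF N a distinct den den diff i])
      (simp add: D_mult_G)
  finally show "(M l * (D (Suc l) * G l)) $$ (i, j) = (D l * G l) $$ (i, j)" .
qed (simp_all add: M_def D_def G_def mat_diag_def)

lemma M_inv_mult_D_G: "M_inv l * (D l * G l) = D (Suc l) * G l"
proof -
  have "M_inv l * (D l * G l) = M_inv l * (M l * (D (Suc l) * G l))"
    by (simp add: M_mult_D_G)
  also have "\<dots> = (M_inv l * M l) * (D (Suc l) * G l)"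
    by (rule assoc_mult_mat[of _ N N _ N _ N, symmetric]) (simp_all add: D_mult_G)
  finally show ?thesis by (simp add: M_inv_mult_M D_mult_G)
qed

lemma G_mult_M: "G l * M (Suc l) = (1 / \<gamma>) \<cdot>\<^sub>m G (Suc l)"
proof (rule eq_matI)
  fix i j assume "i < dim_row ((1 / \<gamma>) \<cdot>\<^sub>m G (Suc l))" "j < dim_col ((1 / \<gamma>) \<cdot>\<^sub>m G (Suc l))"
  then have i: "i < N" and j: "j < N" by (auto simp: G_def)
  have "(G l * M (Suc l)) $$ (i, j)
      = g (Suc l) j * (\<Sum>k<N. g l k / (z (Suc (Suc l)) j - a * z (Suc l) k - b))"
    unfolding index_mult_mat_sum[OF carrier_mats(5,2) i j] sum_distrib_left
    using i j by (intro sum.cong refl) (simp add: G_def M_def)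
  then show "(G l * M (Suc l)) $$ (i, j) = ((1 / \<gamma>) \<cdot>\<^sub>m G (Suc l)) $$ (i, j)"
    using i j secular[OF j] by (simp add: G_def g_def)
qed (simp_all add: G_def M_def)

lemma affine_Z_M_intertwine: "(a \<cdot>\<^sub>m Z l + b \<cdot>\<^sub>m 1\<^sub>m N) * M l + G l = M l * Z (Suc l)"
  unfolding Z_def mat_diag_affine mat_diag_mult_left[OF carrier_mats(2)]
    mat_diag_mult_right[OF carrier_mats(2)]
proof (rule eq_matI)
  fix i j assume "i < dim_row (mat N N (\<lambda>(i, j). M l $$ (i, j) * z (Suc l) j))"
    "j < dim_col (mat N N (\<lambda>(i, j). M l $$ (i, j) * z (Suc l) j))"
  then have i: "i < N" and j: "j < N" by auto
  have "(a * z l i + b) * (g l j / (z (Suc l) j - a * z l i - b)) + g l j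
      = g l j / (z (Suc l) j - a * z l i - b) * z (Suc l) j"
    using diff[OF j i] by (simp add: field_simps)
  then show "(mat N N (\<lambda>(i, j). (a * z l i + b) * M l $$ (i, j)) + G l) $$ (i, j)
      = mat N N (\<lambda>(i, j). M l $$ (i, j) * z (Suc l) j) $$ (i, j)"
    using i j by (simp add: M_def G_def)
qed (simp_all add: G_def)

lemmas mult_carrier_N [simp] = mult_carrier_mat[of _ N N _ N]
lemmas minus_carrier_N [simp] = minus_carrier_mat[of _ N N]

lemma affine_update_similar_Z:
  assumes X: "X \<in> carrier_mat N N" and weights: "\<gamma> ^ k \<cdot>\<^sub>m X = D (Suc k) * G k"
  shows "similar_mat_wit (a \<cdot>\<^sub>m Z (Suc k) + b \<cdot>\<^sub>m 1\<^sub>m N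
      + \<gamma> ^ Suc k \<cdot>\<^sub>m ((\<eta> \<cdot>\<^sub>m Z (Suc k) + \<beta> \<cdot>\<^sub>m 1\<^sub>m N) * X))
      (Z (Suc (Suc k))) (M (Suc k)) (M_inv (Suc k))"
proof -
  let ?E = "\<eta> \<cdot>\<^sub>m Z (Suc k) + \<beta> \<cdot>\<^sub>m 1\<^sub>m N"
  have "\<gamma> ^ Suc k \<cdot>\<^sub>m (?E * X) = \<gamma> \<cdot>\<^sub>m (?E * (\<gamma> ^ k \<cdot>\<^sub>m X))"
    using X by (simp add: mult_smult_distrib[of _ N N _ N] smult_smult_mat)
  also have "\<dots> = \<gamma> \<cdot>\<^sub>m G k"
    unfolding weights
    by (simp add: assoc_mult_mat[of _ N N _ N _ N, symmetric] affine_Z_mult_D left_mult_one_mat[of _ N N])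
  finally have update: "\<gamma> ^ Suc k \<cdot>\<^sub>m (?E * X) = \<gamma> \<cdot>\<^sub>m G k" .
  let ?Y = "a \<cdot>\<^sub>m Z (Suc k) + b \<cdot>\<^sub>m 1\<^sub>m N + \<gamma> \<cdot>\<^sub>m G k"
  have "?Y * M (Suc k) = (a \<cdot>\<^sub>m Z (Suc k) + b \<cdot>\<^sub>m 1\<^sub>m N) * M (Suc k) + \<gamma> \<cdot>\<^sub>m (G k * M (Suc k))"
    by (simp add: add_mult_distrib_mat[of _ N N _ _ N] mult_smult_assoc_mat[of _ N N _ N])
  also have "\<dots> = M (Suc k) * Z (Suc (Suc k))"
    using \<gamma> by (simp add: G_mult_M smult_smult_mat one_smult_mat affine_Z_M_intertwine)
  finally have YM: "?Y * M (Suc k) = M (Suc k) * Z (Suc (Suc k))" .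
  have "?Y = ?Y * (M (Suc k) * M_inv (Suc k))"
    by (simp add: M_mult_M_inv right_mult_one_mat[of _ N N])
  also have "\<dots> = M (Suc k) * Z (Suc (Suc k)) * M_inv (Suc k)"
    unfolding YM[symmetric] by (rule assoc_mult_mat[of _ N N _ N _ N, symmetric]) auto
  finally have "?Y = M (Suc k) * Z (Suc (Suc k)) * M_inv (Suc k)" .
  then show ?thesis
    unfolding update by (intro similar_mat_witI[of _ _ N]) (simp_all add: M_mult_M_inv M_inv_mult_M)
qed

lemma weights_conjugate_Suc:
  assumes X: "X \<in> carrier_mat N N" and weights: "\<gamma> ^ k \<cdot>\<^sub>m X = D (Suc k) * G k"
  shows "\<gamma> ^ Suc k \<cdot>\<^sub>m (M_inv (Suc k) * X * M (Suc k)) = D (Suc (Suc k)) * G (Suc k)"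
proof -
  have "\<gamma> ^ Suc k \<cdot>\<^sub>m (M_inv (Suc k) * X * M (Suc k))
      = \<gamma> \<cdot>\<^sub>m (M_inv (Suc k) * (\<gamma> ^ k \<cdot>\<^sub>m X) * M (Suc k))"
    using X by (simp add: mult_smult_distrib[of _ N N _ N] mult_smult_assoc_mat[of _ N N _ N] smult_smult_mat)
  also have "\<dots> = \<gamma> \<cdot>\<^sub>m (M_inv (Suc k) * (D (Suc k) * (G k * M (Suc k))))"
    unfolding weights by (simp add: assoc_mult_mat[of _ N N _ N _ N])
  also have "\<dots> = M_inv (Suc k) * (D (Suc k) * G (Suc k))"
    using \<gamma> by (simp add: G_mult_M mult_smult_distrib[of _ N N _ N] smult_smult_mat one_smult_mat)
  finally show ?thesis by (simp add: M_inv_mult_D_G)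
qed

lemma initial_update_eq:
  assumes \<beta>: "\<beta> \<noteq> 0" and a_eq: "a = \<alpha> + \<eta> * b / \<beta>"
    and W: "W = D 0 * (M 0 * Z 1 * M_inv 0 - \<alpha> \<cdot>\<^sub>m Z 0) - (b / \<beta>) \<cdot>\<^sub>m 1\<^sub>m N"
  shows "(\<eta> \<cdot>\<^sub>m Z 0 + \<beta> \<cdot>\<^sub>m 1\<^sub>m N) * W = M 0 * Z 1 * M_inv 0 - (a \<cdot>\<^sub>m Z 0 + b \<cdot>\<^sub>m 1\<^sub>m N)"
proof -
  let ?E = "\<eta> \<cdot>\<^sub>m Z 0 + \<beta> \<cdot>\<^sub>m 1\<^sub>m N"
  let ?P = "M 0 * Z 1 * M_inv 0"
  have affine: "a \<cdot>\<^sub>m Z 0 + b \<cdot>\<^sub>m 1\<^sub>m N = \<alpha> \<cdot>\<^sub>m Z 0 + (b / \<beta>) \<cdot>\<^sub>m ?E"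
    unfolding Z_def mat_diag_affine using \<beta>
    by (intro eq_matI) (auto simp: a_eq mat_diag_def field_simps)
  have "?E * W = ?P - \<alpha> \<cdot>\<^sub>m Z 0 - (b / \<beta>) \<cdot>\<^sub>m ?E"
    unfolding W
    by (simp add: mult_minus_distrib_mat[of _ N N _ N] assoc_mult_mat[of _ N N _ N _ N, symmetric]
        affine_Z_mult_D mult_smult_distrib[of _ N N _ N] left_mult_one_mat[of _ N N])
  then show ?thesis
    unfolding affine using mat_diff_diff_eq[of ?P N N "\<alpha> \<cdot>\<^sub>m Z 0" "(b / \<beta>) \<cdot>\<^sub>m ?E"] by simp
qed

lemma initial_similar_Z:
  assumes \<beta>: "\<beta> \<noteq> 0" and a_eq: "a = \<alpha> + \<eta> * b / \<beta>"
    and W: "W = D 0 * (M 0 * Z 1 * M_inv 0 - \<alpha> \<cdot>\<^sub>m Z 0) - (b / \<beta>) \<cdot>\<^sub>m 1\<^sub>m N"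
  shows "similar_mat_wit (a \<cdot>\<^sub>m Z 0 + b \<cdot>\<^sub>m 1\<^sub>m N + (\<eta> \<cdot>\<^sub>m Z 0 + \<beta> \<cdot>\<^sub>m 1\<^sub>m N) * W)
      (Z 1) (M 0) (M_inv 0)"
    and "M_inv 0 * W * M 0 = D 1 * G 0"
proof -
  let ?E = "\<eta> \<cdot>\<^sub>m Z 0 + \<beta> \<cdot>\<^sub>m 1\<^sub>m N"
  let ?P = "M 0 * Z 1 * M_inv 0"
  note EW = initial_update_eq[OF \<beta> a_eq W]
  then have "a \<cdot>\<^sub>m Z 0 + b \<cdot>\<^sub>m 1\<^sub>m N + ?E * W = ?P"
    using mat_add_diff_cancel_left(2)[of "a \<cdot>\<^sub>m Z 0 + b \<cdot>\<^sub>m 1\<^sub>m N" N N ?P] by simp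
  then show "similar_mat_wit (a \<cdot>\<^sub>m Z 0 + b \<cdot>\<^sub>m 1\<^sub>m N + ?E * W) (Z 1) (M 0) (M_inv 0)"
    by (intro similar_mat_witI[of _ _ N]) (simp_all add: M_mult_M_inv M_inv_mult_M)
  have "?E * W * M 0 = ?P * M 0 - (a \<cdot>\<^sub>m Z 0 + b \<cdot>\<^sub>m 1\<^sub>m N) * M 0"
    unfolding EW by (rule minus_mult_distrib_mat[of _ N N _ _ N]) auto
  also have "?P * M 0 = M 0 * Z 1"
    by (simp add: assoc_mult_mat[of _ N N _ N _ N] M_inv_mult_M right_mult_one_mat[of _ N N])
  also have "M 0 * Z 1 - (a \<cdot>\<^sub>m Z 0 + b \<cdot>\<^sub>m 1\<^sub>m N) * M 0 = G 0"
    unfolding affine_Z_M_intertwine[of 0, folded One_nat_def, symmetric]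
    by (rule mat_add_diff_cancel_left(1)[of _ N N]) simp_all
  finally have EWM: "?E * W * M 0 = G 0" .
  have W_carrier: "W \<in> carrier_mat N N" unfolding W by simp
  have "D 0 * G 0 = (D 0 * ?E) * (W * M 0)"
    unfolding EWM[symmetric] using W_carrier by (simp add: assoc_mult_mat[of _ N N _ N _ N])
  also have "\<dots> = W * M 0"
    unfolding affine_Z_mult_D(2) using W_carrier by (intro left_mult_one_mat[of _ N N]) simp
  finally have WM: "W * M 0 = D 0 * G 0" ..
  have "M_inv 0 * W * M 0 = M_inv 0 * (W * M 0)"
    by (rule assoc_mult_mat[of _ N N _ N _ N]) (use W_carrier in auto)
  also have "\<dots> = D 1 * G 0"
    unfolding WM One_nat_def by (rule M_inv_mult_D_G)
  finally show "M_inv 0 * W * M 0 = D 1 * G 0" .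
qed

lemma similar_Z_invariant:
  assumes W: "W \<in> carrier_mat N N" and U: "\<And>l. U l \<in> carrier_mat N N"
    and U_Suc: "\<And>l. U (Suc l) = a \<cdot>\<^sub>m U l + b \<cdot>\<^sub>m 1\<^sub>m N + \<gamma> ^ l \<cdot>\<^sub>m ((\<eta> \<cdot>\<^sub>m U l + \<beta> \<cdot>\<^sub>m 1\<^sub>m N) * W)"
    and U_1: "similar_mat_wit (U 1) (Z 1) (M 0) (M_inv 0)" and W_1: "M_inv 0 * W * M 0 = D 1 * G 0"
  shows "\<exists>R Ri. similar_mat_wit (U (Suc k)) (Z (Suc k)) R Ri \<and> \<gamma> ^ k \<cdot>\<^sub>m (Ri * W * R) = D (Suc k) * G k"
proof (induction k)
  case 0
  show ?case
    unfolding One_nat_def[symmetric] power_0 one_smult_mat using U_1 W_1 by blast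
next
  case (Suc k)
  then obtain R Ri where wit: "similar_mat_wit (U (Suc k)) (Z (Suc k)) R Ri"
    and weights: "\<gamma> ^ k \<cdot>\<^sub>m (Ri * W * R) = D (Suc k) * G k"
    by blast
  have R: "R \<in> carrier_mat N N" "Ri \<in> carrier_mat N N"
    using similar_mat_witD2[OF U wit] by auto
  let ?X = "Ri * W * R"
  have X: "?X \<in> carrier_mat N N" using R W by simp
  have "similar_mat_wit (U (Suc (Suc k)))
      (a \<cdot>\<^sub>m Z (Suc k) + b \<cdot>\<^sub>m 1\<^sub>m N + \<gamma> ^ Suc k \<cdot>\<^sub>m ((\<eta> \<cdot>\<^sub>m Z (Suc k) + \<beta> \<cdot>\<^sub>m 1\<^sub>m N) * ?X)) R Ri"
    unfolding U_Suc[of "Suc k"] by (rule similar_mat_wit_affine_update[OF wit U W])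
  from similar_mat_wit_trans[OF this affine_update_similar_Z[OF X weights]]
  have "similar_mat_wit (U (Suc (Suc k))) (Z (Suc (Suc k))) (R * M (Suc k)) (M_inv (Suc k) * Ri)" .
  moreover have "(M_inv (Suc k) * Ri) * W * (R * M (Suc k)) = M_inv (Suc k) * ?X * M (Suc k)"
    using R W by (simp add: assoc_mult_mat[of _ N N _ N _ N])
  ultimately show ?case
    using weights_conjugate_Suc[OF X weights]
    by (intro exI[of _ "R * M (Suc k)"] exI[of _ "M_inv (Suc k) * Ri"]) simp
qed

theorem similar_mat_Z:
  assumes \<beta>: "\<beta> \<noteq> 0" and a_eq: "a = \<alpha> + \<eta> * b / \<beta>"
    and W: "W = D 0 * (M 0 * Z 1 * M_inv 0 - \<alpha> \<cdot>\<^sub>m Z 0) - (b / \<beta>) \<cdot>\<^sub>m 1\<^sub>m N"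
    and U: "\<And>l. U l \<in> carrier_mat N N" and U_0: "U 0 = Z 0"
    and U_Suc: "\<And>l. U (Suc l) = a \<cdot>\<^sub>m U l + b \<cdot>\<^sub>m 1\<^sub>m N + \<gamma> ^ l \<cdot>\<^sub>m ((\<eta> \<cdot>\<^sub>m U l + \<beta> \<cdot>\<^sub>m 1\<^sub>m N) * W)"
  shows "similar_mat (U l) (Z l)"
proof (cases l)
  case 0
  then show ?thesis using U_0 similar_mat_refl[of "Z 0" N] by simp
next
  case (Suc k)
  have W_carrier: "W \<in> carrier_mat N N" unfolding W by simp
  have "U 1 = a \<cdot>\<^sub>m Z 0 + b \<cdot>\<^sub>m 1\<^sub>m N + (\<eta> \<cdot>\<^sub>m Z 0 + \<beta> \<cdot>\<^sub>m 1\<^sub>m N) * W"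
    using U_Suc[of 0] by (simp add: U_0 one_smult_mat)
  then have "similar_mat_wit (U 1) (Z 1) (M 0) (M_inv 0)"
    using initial_similar_Z(1)[OF \<beta> a_eq W] by simp
  from similar_Z_invariant[OF W_carrier U U_Suc this initial_similar_Z(2)[OF \<beta> a_eq W]]
  have "\<exists>R Ri. similar_mat_wit (U (Suc k)) (Z (Suc k)) R Ri" by blast
  then show ?thesis unfolding Suc similar_mat_def .
qed

end

theorem proposition2p4p1:
  fixes N :: nat and \<alpha> \<beta> \<gamma> \<eta> \<rho> a b :: complex
    and z :: "nat \<Rightarrow> nat \<Rightarrow> complex"
    and M0 U0 V0 A B :: "complex mat"
    and Z :: "nat \<Rightarrow> complex mat"
    and U :: "nat \<Rightarrow> complex mat"
  assumes N: "N \<ge> 1"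
    and \<beta>: "\<beta> \<noteq> 0" and \<gamma>0: "\<gamma> \<noteq> 0" and \<gamma>1: "\<gamma> \<noteq> 1"
    and a_def: "a = \<alpha> + \<eta> * \<rho> / (1 - \<gamma>)"
    and b_def: "b = \<beta> * \<rho> / (1 - \<gamma>)"
    and a0: "a \<noteq> 0"
    \<comment> \<open>genericity\<close>
    and distinct: "\<And>l. inj_on (z l) {..<N}"
    and den1: "\<And>l j. j < N \<Longrightarrow> \<eta> * z l j + \<beta> \<noteq> 0"
    and den2: "\<And>l n k. n < N \<Longrightarrow> k < N \<Longrightarrow> z (Suc l) n - a * z l k - b \<noteq> 0"
    \<comment> \<open>z(l+2) are the N roots of the rational equation\<close>
    and roots: "\<And>l w. (\<forall>k<N. w - a * z (Suc l) k - b \<noteq> 0) \<Longrightarrow>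
        ((\<Sum>k<N. ghat N a b \<eta> \<beta> (z l) (z (Suc l)) k / (w - a * z (Suc l) k - b)) = 1 / \<gamma>
         \<longleftrightarrow> (\<exists>n<N. w = z (Suc (Suc l)) n))"
    and Z_def: "\<And>l. Z l = mat_diag N (z l)"
    and U0_def: "U0 = Z 0"
    and M0_def: "M0 = mat N N (\<lambda>(n, m). ghat N a b \<eta> \<beta> (z 0) (z 1) m / (z 1 m - a * z 0 n - b))"
    and M0_inv: "invertible_mat M0"
    and EZ_inv: "invertible_mat (\<eta> \<cdot>\<^sub>m Z 0 + \<beta> \<cdot>\<^sub>m 1\<^sub>m N)"
    and V0_def: "V0 = minv (\<eta> \<cdot>\<^sub>m Z 0 + \<beta> \<cdot>\<^sub>m 1\<^sub>m N) * (M0 * Z 1 * minv M0 - \<alpha> \<cdot>\<^sub>m Z 0)"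
    and A_def: "A = \<eta> \<cdot>\<^sub>m V0 - (\<eta> / \<beta> * b) \<cdot>\<^sub>m 1\<^sub>m N"
    and B_def: "B = \<beta> \<cdot>\<^sub>m V0 - b \<cdot>\<^sub>m 1\<^sub>m N"
    \<comment> \<open>U l = U0 P(0,l-1) + sum_{k=1}^{l} (B gamma^(k-1) + b I) P(k,l-1), where
        P(l1,l2) = prod_{j=l1}^{l2} (A gamma^j + a I) (identity if l1 > l2); the product
        over j from k to l-1 is written with the exclusive upper bound l\<close>
    and U_def: "\<And>l. U l =
        U0 * mat_prod_list N (map (\<lambda>j. \<gamma> ^ j \<cdot>\<^sub>m A + a \<cdot>\<^sub>m 1\<^sub>m N) [0..<l])
        + mat_sum_list N (map (\<lambda>k. (\<gamma> ^ (k - 1) \<cdot>\<^sub>m B + b \<cdot>\<^sub>m 1\<^sub>m N)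
             * mat_prod_list N (map (\<lambda>j. \<gamma> ^ j \<cdot>\<^sub>m A + a \<cdot>\<^sub>m 1\<^sub>m N) [k..<l])) [1..<Suc l])"
  shows "\<forall>l. mset (map (z l) [0..<N]) = eigenvalue_mset (U l)"
proof -
  have "(\<Sum>k<N. ghat N a b \<eta> \<beta> (z l) (z (Suc l)) k / (z (Suc (Suc l)) j - a * z (Suc l) k - b)) = 1 / \<gamma>"
    if "j < N" for l j
    using roots[of "z (Suc (Suc l)) j" l] den2 that by blast
  then interpret sd: secular_dynamics N a b \<eta> \<beta> \<gamma> z
    using N a0 \<gamma>0 distinct den1 den2 by unfold_locales
  have Z: "Z l = sd.Z l" for l by (simp add: Z_def sd.Z_def)
  have M0: "M0 = sd.M 0" by (simp add: M0_def sd.M_def sd.g_def)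
  \<comment> \<open>invertibility of M(0) and \<eta> Z(0) + \<beta> I is proved\<close>
  have V0: "V0 = sd.D 0 * (sd.M 0 * sd.Z 1 * sd.M_inv 0 - \<alpha> \<cdot>\<^sub>m sd.Z 0)"
    unfolding V0_def Z M0 sd.minv_M sd.minv_affine_Z ..
  define W where "W = V0 - (b / \<beta>) \<cdot>\<^sub>m 1\<^sub>m N"
  have "V0 \<in> carrier_mat N N" unfolding V0 by simp
  then have W_carrier: "W \<in> carrier_mat N N" and "A = \<eta> \<cdot>\<^sub>m W" and "B = \<beta> \<cdot>\<^sub>m W"
    unfolding A_def B_def W_def using \<beta> by (auto intro!: eq_matI simp: algebra_simps)
  then have U: "U l \<in> carrier_mat N N"
    and U_Suc: "U (Suc l) = a \<cdot>\<^sub>m U l + b \<cdot>\<^sub>m 1\<^sub>m N + \<gamma> ^ l \<cdot>\<^sub>m ((\<eta> \<cdot>\<^sub>m U l + \<beta> \<cdot>\<^sub>m 1\<^sub>m N) * W)" for l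
    using product_sum_recurrence[where f = "\<lambda>j. \<gamma> ^ j \<cdot>\<^sub>m A + a \<cdot>\<^sub>m 1\<^sub>m N"
        and g = "\<lambda>k. \<gamma> ^ (k - 1) \<cdot>\<^sub>m B + b \<cdot>\<^sub>m 1\<^sub>m N", OF _ _ _ U_def, of l]
      mult_affine_eq_affine_update[of "U l" N W] W_carrier U0_def Z
    by simp_all
  have U_0: "U 0 = sd.Z 0"
    using U_def[of 0] by (simp add: U0_def Z mat_prod_list_def mat_sum_list_def right_mult_one_mat[of _ N N])
  have "a = \<alpha> + \<eta> * b / \<beta>"
    unfolding a_def b_def using \<beta> \<gamma>1 by (simp add: field_simps)
  then have "similar_mat (U l) (sd.Z l)" for l
    using sd.similar_mat_Z[OF \<beta> _ _ U U_0 U_Suc] unfolding W_def V0 by blast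
  then have "eigenvalue_mset (U l) = mset (map (z l) [0..<N])" for l
    using eigenvalue_mset_similar eigenvalue_mset_mat_diag unfolding sd.Z_def by metis
  then show ?thesis by simp
qed

end
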